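(* Let $\mathcal{H}$ be a complex Hilbert space and $A\in\mathcal{B}(\mathcal{H})$. For a unit vector $x$ put $c(x)=\frac12\langle(|A|+|A^*|)x,x\rangle$ and \[ \xi(x)=\left\langle\left(\big||A|-c(x)I\big|^2+\big||A^*|-c(x)I\big|^2\right)x,x\right\rangle . \] Then \[ \omega^2(A)\le \frac12\left(\left\||A|^2+|A^*|^2\right\|-\inf_{\|x\|=1}\xi(x)\right). \]
   Context: $\mathcal{B}(\mathcal{H})$ denotes the algebra of bounded linear operators on $\mathcal{H}$; for an operator $T$, $|T|=(T^*T)^{1/2}$; $\omega(A)=\sup_{\|x\|=1}|\langle Ax,x\rangle|$ is the numerical radius and $\|\cdot\|$ the operator norm. *)

theory Defs
  imports "HOL-Analysis.Analysis"
begin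

text \<open>Inner product convention: linear in the second argument, conjugate-linear in the first.\<close>

class complex_inner = real_normed_vector +
  fixes cscale :: "complex \<Rightarrow> 'a \<Rightarrow> 'a"  (infixr \<open>*\<^sub>C\<close> 75)
    and cinner :: "'a \<Rightarrow> 'a \<Rightarrow> complex"
  assumes cscale_add_right: "a *\<^sub>C (x + y) = a *\<^sub>C x + a *\<^sub>C y"
    and cscale_add_left: "(a + b) *\<^sub>C x = a *\<^sub>C x + b *\<^sub>C x"
    and cscale_cscale: "a *\<^sub>C (b *\<^sub>C x) = (a * b) *\<^sub>C x"
    and cscale_one: "1 *\<^sub>C x = x"
    and scaleR_cscale: "scaleR r x = complex_of_real r *\<^sub>C x"
    and cinner_commute: "cinner x y = cnj (cinner y x)"
    and cinner_add_left: "cinner (x + y) z = cinner x z + cinner y z"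
    and cinner_cscale_left: "cinner (a *\<^sub>C x) y = cnj a * cinner x y"
    and cinner_ge_zero: "0 \<le> Re (cinner x x)"
    and cinner_eq_zero_iff: "cinner x x = 0 \<longleftrightarrow> x = 0"
    and norm_eq_sqrt_cinner: "norm x = sqrt (Re (cinner x x))"

class chilbert_space = complex_inner + complete_space

definition cbounded_linear :: "('a::complex_inner \<Rightarrow> 'a) \<Rightarrow> bool" where
  "cbounded_linear T \<longleftrightarrow>
     (\<forall>x y. T (x + y) = T x + T y) \<and> (\<forall>c x. T (c *\<^sub>C x) = c *\<^sub>C T x) \<and>
     (\<exists>K. \<forall>x. norm (T x) \<le> norm x * K)"

definition adj :: "('a::complex_inner \<Rightarrow> 'a) \<Rightarrow> ('a \<Rightarrow> 'a)" where
  "adj T = (THE S. \<forall>x y. cinner (T x) y = cinner x (S y))"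

definition cpositive :: "('a::complex_inner \<Rightarrow> 'a) \<Rightarrow> bool" where
  "cpositive P \<longleftrightarrow> cbounded_linear P \<and>
     (\<forall>x. Im (cinner (P x) x) = 0 \<and> 0 \<le> Re (cinner (P x) x))"

definition op_abs :: "('a::complex_inner \<Rightarrow> 'a) \<Rightarrow> ('a \<Rightarrow> 'a)" where
  "op_abs T = (THE P. cpositive P \<and> P \<circ> P = adj T \<circ> T)"

definition numrad :: "('a::complex_inner \<Rightarrow> 'a) \<Rightarrow> real" where
  "numrad A = (SUP x\<in>{x. norm x = 1}. cmod (cinner (A x) x))"

end

theory Submission
  imports Defs
begin

text \<open>For a unit vector \<open>x\<close> put \<open>a = \<langle>|A| x, x\<rangle>\<close>, \<open>b = \<langle>|A\<^sup>*| x, x\<rangle>\<close>, so that \<open>c(x) = (a + b) / 2\<close>.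
  The mixed Schwarz inequality \<open>|\<langle>A x, y\<rangle>|\<^sup>2 \<le> \<langle>|A| x, x\<rangle> \<langle>|A\<^sup>*| y, y\<rangle>\<close> gives
  \<open>|\<langle>A x, x\<rangle>|\<^sup>2 \<le> a b \<le> c(x)\<^sup>2\<close>, while expanding the two squared norms in \<open>\<xi>(x)\<close> gives
  \<open>\<xi>(x) = \<parallel>|A| x\<parallel>\<^sup>2 + \<parallel>|A\<^sup>*| x\<parallel>\<^sup>2 - 2 c(x)\<^sup>2 \<le> \<parallel>|A|\<^sup>2 + |A\<^sup>*|\<^sup>2\<parallel> - 2 c(x)\<^sup>2\<close>.

  Since the modulus \<open>|T|\<close> is given by a definite description, most of the work lies in showing
  that it exists: adjoints come from the Riesz representation theorem, positive square roots
  from the iteration \<open>X\<^sub>n\<^sub>+\<^sub>1 = (S + X\<^sub>n\<^sup>2) / 2\<close>, and the mixed Schwarz inequality from the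
  intertwining relation \<open>A |A|\<^sup>1\<^sup>/\<^sup>2 = |A\<^sup>*|\<^sup>1\<^sup>/\<^sup>2 A\<close>.\<close>

section \<open>Algebra of the complex inner product\<close>

lemma cscale_zero_left [simp]: "0 *\<^sub>C x = 0"
  using cscale_add_left[of 0 0 x] by simp

lemma cscale_zero_right [simp]: "a *\<^sub>C 0 = 0"
  using cscale_add_right[of a 0 0] by simp

lemma cscale_minus_left: "(- a) *\<^sub>C x = - (a *\<^sub>C x)"
  using cscale_add_left[of a "- a" x] by (simp add: minus_unique)

lemma cscale_minus_right: "a *\<^sub>C (- x) = - (a *\<^sub>C x)"
  using cscale_add_right[of a x "- x"] by (simp add: minus_unique)

lemma cscale_diff_right: "a *\<^sub>C (x - y) = a *\<^sub>C x - a *\<^sub>C y"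
  using cscale_add_right[of a x "- y"] by (simp add: cscale_minus_right)

lemma cscale_scaleR_commute: "a *\<^sub>C (r *\<^sub>R x) = r *\<^sub>R (a *\<^sub>C x)"
  by (simp add: scaleR_cscale cscale_cscale mult.commute)

lemma cinner_add_right: "cinner x (y + z) = cinner x y + cinner x z"
  by (metis cinner_commute cinner_add_left complex_cnj_add)

lemma cinner_cscale_right: "cinner x (a *\<^sub>C y) = a * cinner x y"
  by (metis cinner_commute cinner_cscale_left complex_cnj_mult complex_cnj_cnj)

lemma cinner_zero_left [simp]: "cinner 0 y = 0"
  using cinner_add_left[of 0 0 y] by simp

lemma cinner_zero_right [simp]: "cinner x 0 = 0"
  using cinner_add_right[of x 0 0] by simp

lemma cinner_minus_left: "cinner (- x) y = - cinner x y"
  using cinner_add_left[of x "- x" y] by (simp add: minus_unique)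

lemma cinner_minus_right: "cinner x (- y) = - cinner x y"
  using cinner_add_right[of x y "- y"] by (simp add: minus_unique)

lemma cinner_diff_left: "cinner (x - y) z = cinner x z - cinner y z"
  using cinner_add_left[of x "- y" z] by (simp add: cinner_minus_left)

lemma cinner_diff_right: "cinner x (y - z) = cinner x y - cinner x z"
  using cinner_add_right[of x y "- z"] by (simp add: cinner_minus_right)

lemma cinner_scaleR_left: "cinner (r *\<^sub>R x) y = complex_of_real r * cinner x y"
  by (simp add: scaleR_cscale cinner_cscale_left)

lemma cinner_scaleR_right: "cinner x (r *\<^sub>R y) = complex_of_real r * cinner x y"
  by (simp add: scaleR_cscale cinner_cscale_right)

lemmas cinner_simps = cinner_add_left cinner_add_right cinner_cscale_left cinner_cscale_right
  cinner_minus_left cinner_minus_right cinner_diff_left cinner_diff_right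
  cinner_scaleR_left cinner_scaleR_right

lemma cinner_self_eq_norm_sq: "cinner x x = complex_of_real ((norm x)\<^sup>2)"
proof -
  have "Im (cinner x x) = 0"
    using arg_cong[OF cinner_commute[of x x], of Im] by simp
  then show ?thesis
    using cinner_ge_zero[of x] norm_eq_sqrt_cinner[of x] by (simp add: complex_eq_iff)
qed

lemma power2_norm_eq_cinner: "(norm x)\<^sup>2 = Re (cinner x x)"
  by (simp add: cinner_self_eq_norm_sq)

lemma Re_cinner_commute: "Re (cinner x y) = Re (cinner y x)"
  by (subst cinner_commute) simp

lemma cinner_ext: "(\<And>z. cinner z a = cinner z b) \<Longrightarrow> a = b"
  by (metis cinner_diff_right cinner_eq_zero_iff right_minus_eq)

lemma norm_cscale: "norm (a *\<^sub>C x) = cmod a * norm x"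
proof -
  have "cinner (a *\<^sub>C x) (a *\<^sub>C x) = (a * cnj a) * cinner x x"
    by (simp add: cinner_cscale_left cinner_cscale_right mult_ac)
  also have "\<dots> = complex_of_real ((cmod a * norm x)\<^sup>2)"
    by (simp add: cinner_self_eq_norm_sq complex_norm_square[symmetric] power_mult_distrib)
  finally have "(norm (a *\<^sub>C x))\<^sup>2 = (cmod a * norm x)\<^sup>2"
    by (simp add: power2_norm_eq_cinner)
  then show ?thesis by (rule power2_eq_imp_eq) auto
qed

lemma power2_norm_diff_real_cscale:
  "(norm (u - complex_of_real c *\<^sub>C x))\<^sup>2 = (norm u)\<^sup>2 - 2 * c * Re (cinner u x) + c\<^sup>2 * (norm x)\<^sup>2"
  unfolding power2_norm_eq_cinner using Re_cinner_commute[of x u]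
  by (simp add: cinner_simps power2_eq_square algebra_simps)

lemma parallelogram_law:
  fixes a b :: "'a::complex_inner"
  shows "(norm (a - b))\<^sup>2 + (norm (a + b))\<^sup>2 = 2 * (norm a)\<^sup>2 + 2 * (norm b)\<^sup>2"
  unfolding power2_norm_eq_cinner by (simp add: cinner_simps)

section \<open>Linear, bounded and positive operators\<close>

definition clinear :: "('a::complex_inner \<Rightarrow> 'a) \<Rightarrow> bool" where
  "clinear T \<longleftrightarrow> (\<forall>x y. T (x + y) = T x + T y) \<and> (\<forall>c x. T (c *\<^sub>C x) = c *\<^sub>C T x)"

definition op_bound :: "('a::complex_inner \<Rightarrow> 'a) \<Rightarrow> real \<Rightarrow> bool" where
  "op_bound T K \<longleftrightarrow> (\<forall>x. norm (T x) \<le> K * norm x)"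

definition selfadjoint :: "('a::complex_inner \<Rightarrow> 'a) \<Rightarrow> bool" where
  "selfadjoint T \<longleftrightarrow> (\<forall>x y. cinner (T x) y = cinner x (T y))"

lemma clinear_add: "clinear T \<Longrightarrow> T (x + y) = T x + T y"
  by (simp add: clinear_def)

lemma clinear_cscale: "clinear T \<Longrightarrow> T (c *\<^sub>C x) = c *\<^sub>C T x"
  by (simp add: clinear_def)

lemma clinear_zero: "clinear T \<Longrightarrow> T 0 = 0"
  using clinear_cscale[of T 0 0] by simp

lemma clinear_minus: "clinear T \<Longrightarrow> T (- x) = - T x"
  using clinear_cscale[of T "-1" x] by (simp add: cscale_minus_left cscale_one)

lemma clinear_diff: "clinear T \<Longrightarrow> T (x - y) = T x - T y"
  using clinear_add[of T x "- y"] clinear_minus[of T y] by simp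

lemma clinear_scaleR: "clinear T \<Longrightarrow> T (r *\<^sub>R x) = r *\<^sub>R T x"
  by (simp add: scaleR_cscale clinear_cscale)

lemmas clinear_simps = clinear_add clinear_cscale clinear_zero clinear_minus clinear_diff clinear_scaleR

lemma clinear_id: "clinear (\<lambda>x. x)"
  by (simp add: clinear_def)

lemma clinear_compose: "clinear T \<Longrightarrow> clinear U \<Longrightarrow> clinear (\<lambda>x. T (U x))"
  by (simp add: clinear_def)

lemma op_boundD: "op_bound T K \<Longrightarrow> norm (T x) \<le> K * norm x"
  by (simp add: op_bound_def)

lemma op_bound_mono: "op_bound T K \<Longrightarrow> K \<le> L \<Longrightarrow> op_bound T L"
  unfolding op_bound_def by (meson mult_right_mono norm_ge_zero order_trans)

lemma op_bound_compose:
  "op_bound T K \<Longrightarrow> op_bound U L \<Longrightarrow> 0 \<le> K \<Longrightarrow> op_bound (\<lambda>x. T (U x)) (K * L)"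
  unfolding op_bound_def by (metis (no_types, opaque_lifting) mult.assoc mult_left_mono order_trans)

lemma cbounded_linear_iff: "cbounded_linear T \<longleftrightarrow> clinear T \<and> (\<exists>K. op_bound T K)"
  unfolding cbounded_linear_def clinear_def op_bound_def by (simp add: mult.commute)

lemma cbounded_linear_clinear: "cbounded_linear T \<Longrightarrow> clinear T"
  by (simp add: cbounded_linear_iff)

lemma cbounded_linear_op_bound:
  assumes "cbounded_linear T"
  obtains K where "K > 0" "op_bound T K"
proof -
  obtain K where "op_bound T K" using assms by (auto simp: cbounded_linear_iff)
  then have "op_bound T (\<bar>K\<bar> + 1)" by (rule op_bound_mono) simp
  moreover have "\<bar>K\<bar> + 1 > 0" by arith
  ultimately show ?thesis using that by blast
qed

lemma clinear_op_bound_bounded_linear: "clinear T \<Longrightarrow> op_bound T K \<Longrightarrow> bounded_linear T"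
  by (rule bounded_linear_intro[where K = K])
    (auto simp: clinear_simps op_bound_def mult.commute)

lemma cbounded_linear_bounded_linear: "cbounded_linear T \<Longrightarrow> bounded_linear T"
  by (meson cbounded_linear_iff clinear_op_bound_bounded_linear)

lemma cbounded_linear_diff_cscale:
  assumes "cbounded_linear T"
  shows "cbounded_linear (\<lambda>y. T y - c *\<^sub>C y)"
proof -
  obtain K where K: "op_bound T K" using assms by (auto simp: cbounded_linear_iff)
  have "clinear (\<lambda>y. T y - c *\<^sub>C y)"
    using cbounded_linear_clinear[OF assms] unfolding clinear_def
    by (simp add: cscale_add_right cscale_cscale mult.commute cscale_diff_right)
  moreover have "op_bound (\<lambda>y. T y - c *\<^sub>C y) (K + cmod c)"
    unfolding op_bound_def
  proof
    fix y
    have "norm (T y - c *\<^sub>C y) \<le> norm (T y) + norm (c *\<^sub>C y)" by (rule norm_triangle_ineq4)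
    also have "\<dots> \<le> (K + cmod c) * norm y"
      using op_boundD[OF K, of y] by (simp add: norm_cscale algebra_simps)
    finally show "norm (T y - c *\<^sub>C y) \<le> (K + cmod c) * norm y" .
  qed
  ultimately show ?thesis by (auto simp: cbounded_linear_iff)
qed

lemma selfadjointD: "selfadjoint T \<Longrightarrow> cinner (T x) y = cinner x (T y)"
  by (simp add: selfadjoint_def)

lemma selfadjoint_quadratic_form_real:
  assumes "selfadjoint T"
  shows "cinner (T x) x = complex_of_real (Re (cinner (T x) x))"
proof -
  have "cinner (T x) x = cnj (cinner (T x) x)"
    using selfadjointD[OF assms, of x x] cinner_commute[of x "T x"] by simp
  then show ?thesis by (metis Reals_cnj_iff complex_is_Real_iff of_real_Re)
qed

lemma selfadjoint_by_polarization:
  assumes T: "clinear T" and real: "\<And>x. Im (cinner (T x) x) = 0"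
  shows "selfadjoint T"
  unfolding selfadjoint_def
proof (intro allI)
  fix x y
  have sym: "cinner (T v) v = cinner v (T v)" for v
    using real[of v] cinner_commute[of v "T v"] by (simp add: complex_eq_iff)
  have "cinner (T x) y + cinner (T y) x = cinner x (T y) + cinner y (T x)"
    using sym[of "x + y"] sym[of x] sym[of y]
    by (simp add: clinear_simps[OF T] cinner_simps algebra_simps)
  moreover have "\<i> * (cinner y (T x) + cinner (T x) y) = \<i> * (cinner x (T y) + cinner (T y) x)"
    using sym[of "x + \<i> *\<^sub>C y"] sym[of x] sym[of y]
    by (simp add: clinear_simps[OF T] cinner_simps algebra_simps)
  then have "cinner y (T x) + cinner (T x) y = cinner x (T y) + cinner (T y) x"
    by simp
  ultimately show "cinner (T x) y = cinner x (T y)" by algebra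
qed

lemma cpositive_selfadjoint: "cpositive P \<Longrightarrow> selfadjoint P"
  by (auto simp: cpositive_def cbounded_linear_iff intro: selfadjoint_by_polarization)

lemma cpositive_quadratic_form_nonneg: "cpositive P \<Longrightarrow> 0 \<le> Re (cinner (P x) x)"
  by (simp add: cpositive_def)

lemma cpositive_id: "cpositive (\<lambda>x. x)"
  unfolding cpositive_def cbounded_linear_iff op_bound_def
  by (auto simp: clinear_id cinner_self_eq_norm_sq intro: exI[of _ 1])

lemma quadratic_discriminant_le:
  fixes a b c :: real
  assumes nonneg: "\<And>t. 0 \<le> a - 2 * t * b + t\<^sup>2 * b * c" and "0 \<le> b" "0 \<le> c"
  shows "b \<le> a * c"
proof (cases "c = 0")
  case True
  show ?thesis
  proof (rule ccontr)
    assume "\<not> b \<le> a * c"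
    then show False using nonneg[of 0] nonneg[of "(a + 1) / (2 * b)"] True
      by (simp add: field_simps)
  qed
next
  case False
  with \<open>0 \<le> c\<close> have "c > 0" by simp
  then show ?thesis using nonneg[of "1 / c"] by (simp add: field_simps power2_eq_square)
qed

text \<open>Expand \<open>0 \<le> \<langle>P (x - s y), x - s y\<rangle>\<close> with \<open>s = t \<langle>P x, y\<rangle>\<^sup>*\<close> for real \<open>t\<close>.\<close>
lemma cpositive_Cauchy_Schwarz:
  assumes P: "cpositive P"
  shows "(cmod (cinner (P x) y))\<^sup>2 \<le> Re (cinner (P x) x) * Re (cinner (P y) y)"
proof -
  have lin: "clinear P" and sa: "selfadjoint P"
    using P cpositive_selfadjoint by (auto simp: cpositive_def cbounded_linear_iff)
  define b where "b = cinner (P x) y"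
  have byx: "cinner (P y) x = cnj b"
    unfolding b_def using selfadjointD[OF sa, of y x] cinner_commute[of y "P x"] by simp
  have bcb: "b * cnj b = complex_of_real ((cmod b)\<^sup>2)"
    by (rule complex_norm_square[symmetric])
  have "0 \<le> Re (cinner (P x) x) - 2 * t * (cmod b)\<^sup>2 + t\<^sup>2 * (cmod b)\<^sup>2 * Re (cinner (P y) y)"
    for t :: real
  proof -
    define s where "s = complex_of_real t * cnj b"
    have "cinner (P (x - s *\<^sub>C y)) (x - s *\<^sub>C y) =
        cinner (P x) x - s * b - cnj s * cnj b + cnj s * s * cinner (P y) y"
      by (simp add: clinear_simps[OF lin] cinner_simps b_def[symmetric] byx algebra_simps)
    also have "s * b = complex_of_real (t * (cmod b)\<^sup>2)"
      by (simp add: s_def bcb mult_ac del: of_real_power)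
    also have "cnj s * cnj b = complex_of_real (t * (cmod b)\<^sup>2)"
      by (simp add: s_def bcb mult_ac del: of_real_power)
    also have "cnj s * s = complex_of_real (t\<^sup>2 * (cmod b)\<^sup>2)"
    proof -
      have "cnj s * s = complex_of_real t * complex_of_real t * (b * cnj b)"
        by (simp add: s_def mult_ac)
      then show ?thesis by (simp add: bcb power2_eq_square del: of_real_power)
    qed
    finally show ?thesis
      using cpositive_quadratic_form_nonneg[OF P, of "x - s *\<^sub>C y"]
        selfadjoint_quadratic_form_real[OF sa, of y] by (simp del: of_real_power)
  qed
  from quadratic_discriminant_le[OF this] show ?thesis
    using cpositive_quadratic_form_nonneg[OF P] unfolding b_def by simp
qed

lemma cinner_Cauchy_Schwarz: "cmod (cinner x y) \<le> norm x * norm y"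
proof -
  have "(cmod (cinner x y))\<^sup>2 \<le> (norm x * norm y)\<^sup>2"
    using cpositive_Cauchy_Schwarz[OF cpositive_id, of x y]
    by (simp add: power2_norm_eq_cinner power_mult_distrib)
  then show ?thesis by (rule power2_le_imp_le) simp
qed

lemma Re_cinner_le: "Re (cinner x y) \<le> norm x * norm y"
  using cinner_Cauchy_Schwarz[of x y] complex_Re_le_cmod[of "cinner x y"] by linarith

lemma cpositive_quadratic_form_eq_0:
  assumes "cpositive P" "Re (cinner (P v) v) = 0"
  shows "P v = 0"
  using cpositive_Cauchy_Schwarz[OF assms(1), of v "P v"] assms(2) by (simp add: cinner_eq_zero_iff)

lemma cpositive_norm_square_le:
  assumes P: "cpositive P" and bound: "op_bound P k"
  shows "(norm (P x))\<^sup>2 \<le> k * Re (cinner (P x) x)"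
proof -
  have "((norm (P x))\<^sup>2)\<^sup>2 \<le> Re (cinner (P x) x) * Re (cinner (P (P x)) (P x))"
    using cpositive_Cauchy_Schwarz[OF P, of x "P x"] by (simp add: cinner_self_eq_norm_sq del: of_real_power)
  also have "\<dots> \<le> Re (cinner (P x) x) * (k * (norm (P x))\<^sup>2)"
  proof (rule mult_left_mono)
    have "Re (cinner (P (P x)) (P x)) \<le> norm (P (P x)) * norm (P x)" by (rule Re_cinner_le)
    also have "\<dots> \<le> k * norm (P x) * norm (P x)"
      by (rule mult_right_mono[OF op_boundD[OF bound]]) simp
    finally show "Re (cinner (P (P x)) (P x)) \<le> k * (norm (P x))\<^sup>2" by (simp add: power2_eq_square)
  qed (rule cpositive_quadratic_form_nonneg[OF P])
  finally have le: "(norm (P x))\<^sup>2 * (norm (P x))\<^sup>2 \<le> (k * Re (cinner (P x) x)) * (norm (P x))\<^sup>2"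
    by (simp add: power2_eq_square mult_ac)
  show ?thesis
  proof (cases "P x = 0")
    case False
    then show ?thesis using mult_right_le_imp_le[OF le] by simp
  qed simp
qed

lemma bounded_bilinear_cinner: "bounded_bilinear cinner"
proof
  show "\<exists>K. \<forall>a b. norm (cinner a b) \<le> norm a * norm b * K"
    using cinner_Cauchy_Schwarz by (intro exI[of _ 1]) auto
qed (simp_all add: cinner_simps scaleR_conv_of_real)

lemmas tendsto_cinner [tendsto_intros] = bounded_bilinear.tendsto[OF bounded_bilinear_cinner]

lemmas continuous_on_cinner [continuous_intros] =
  bounded_bilinear.continuous_on[OF bounded_bilinear_cinner]

lemma tendsto_cscale [tendsto_intros]: "(f \<longlongrightarrow> l) F \<Longrightarrow> ((\<lambda>n. c *\<^sub>C f n) \<longlongrightarrow> c *\<^sub>C l) F"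
  by (rule bounded_linear.tendsto, rule bounded_linear_intro[where K = "cmod c"])
    (simp_all add: cscale_add_right cscale_scaleR_commute norm_cscale)

section \<open>Orthogonal projection, Riesz representation and adjoints\<close>

lemma Cauchy_if_dist_le_null:
  fixes u :: "nat \<Rightarrow> 'a::metric_space"
  assumes e: "e \<longlonglongrightarrow> 0" and dist: "\<And>m n. dist (u m) (u n) \<le> e m + e n"
  shows "Cauchy u"
proof (rule metric_CauchyI)
  fix \<epsilon> :: real assume "0 < \<epsilon>"
  then obtain N where N: "\<And>n. N \<le> n \<Longrightarrow> \<bar>e n\<bar> < \<epsilon> / 2"
    using LIMSEQ_D[OF e, of "\<epsilon> / 2"] by auto
  have "dist (u m) (u n) < \<epsilon>" if "N \<le> m" "N \<le> n" for m n
    using dist[of m n] N[OF that(1)] N[OF that(2)] by linarith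
  then show "\<exists>N. \<forall>m\<ge>N. \<forall>n\<ge>N. dist (u m) (u n) < \<epsilon>" by blast
qed

definition csubspace :: "'a::complex_inner set \<Rightarrow> bool" where
  "csubspace M \<longleftrightarrow> 0 \<in> M \<and> (\<forall>u\<in>M. \<forall>v\<in>M. u + v \<in> M) \<and> (\<forall>c. \<forall>u\<in>M. c *\<^sub>C u \<in> M)"

lemma csubspace_convex: "csubspace M \<Longrightarrow> convex M"
  unfolding csubspace_def convex_def scaleR_cscale by blast

lemma csubspace_range:
  assumes "clinear T"
  shows "csubspace (range T)"
  unfolding csubspace_def
proof (intro conjI ballI allI)
  show "0 \<in> range T" using clinear_zero[OF assms] by (metis rangeI)
next
  fix u v assume "u \<in> range T" "v \<in> range T"
  then obtain a b where "u = T a" "v = T b" by blast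
  then show "u + v \<in> range T" by (simp add: clinear_add[OF assms, symmetric])
next
  fix c u assume "u \<in> range T"
  then obtain a where "u = T a" by blast
  then show "c *\<^sub>C u \<in> range T" by (simp add: clinear_cscale[OF assms, symmetric])
qed

lemma csubspace_closure:
  assumes "csubspace M"
  shows "csubspace (closure M)"
  unfolding csubspace_def
proof (intro conjI ballI allI)
  show "0 \<in> closure M" using assms closure_subset by (auto simp: csubspace_def)
next
  fix u v assume "u \<in> closure M" "v \<in> closure M"
  then obtain f g where "\<And>n. f n \<in> M" "f \<longlonglongrightarrow> u" "\<And>n. g n \<in> M" "g \<longlonglongrightarrow> v"
    unfolding closure_sequential by blast
  with assms show "u + v \<in> closure M"
    unfolding closure_sequential csubspace_def by (intro exI[of _ "\<lambda>n. f n + g n"]) (auto intro: tendsto_add)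
next
  fix c u assume "u \<in> closure M"
  then obtain f where "\<And>n. f n \<in> M" "f \<longlonglongrightarrow> u"
    unfolding closure_sequential by blast
  with assms show "c *\<^sub>C u \<in> closure M"
    unfolding closure_sequential csubspace_def by (intro exI[of _ "\<lambda>n. c *\<^sub>C f n"]) (auto intro: tendsto_cscale)
qed

text \<open>The parallelogram law applied to \<open>x - u\<close> and \<open>x - v\<close>, with the midpoint of \<open>u\<close> and \<open>v\<close> in \<open>M\<close>.\<close>
lemma convex_dist_bound:
  fixes M :: "'a::complex_inner set"
  assumes "convex M" "u \<in> M" "v \<in> M" and lower: "\<And>w. w \<in> M \<Longrightarrow> D \<le> (norm (x - w))\<^sup>2"
  shows "(norm (u - v))\<^sup>2 \<le> 2 * (norm (x - u))\<^sup>2 + 2 * (norm (x - v))\<^sup>2 - 4 * D"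
proof -
  have "(1/2) *\<^sub>R u + (1/2) *\<^sub>R v \<in> M" by (rule convexD[OF assms(1-3)]) auto
  then have "D \<le> (norm (x - ((1/2) *\<^sub>R u + (1/2) *\<^sub>R v)))\<^sup>2" by (rule lower)
  also have "x - ((1/2) *\<^sub>R u + (1/2) *\<^sub>R v) = (1/2) *\<^sub>R ((x - u) + (x - v))"
    by (simp add: algebra_simps flip: scaleR_2)
  also have "(norm ((1/2) *\<^sub>R ((x - u) + (x - v))))\<^sup>2 = (norm ((x - u) + (x - v)))\<^sup>2 / 4"
    by (simp add: power2_eq_square)
  finally show ?thesis
    using parallelogram_law[of "x - u" "x - v"] by (simp add: norm_minus_commute)
qed

lemma nearest_point_exists:
  fixes M :: "'a::chilbert_space set"
  assumes "closed M" "convex M" "M \<noteq> {}"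
  obtains m where "m \<in> M" "\<And>v. v \<in> M \<Longrightarrow> norm (x - m) \<le> norm (x - v)"
proof -
  define D where "D = (INF u\<in>M. (norm (x - u))\<^sup>2)"
  have bdd: "bdd_below ((\<lambda>u. (norm (x - u))\<^sup>2) ` M)" by (rule bdd_belowI[of _ 0]) auto
  have lower: "D \<le> (norm (x - w))\<^sup>2" if "w \<in> M" for w
    unfolding D_def using bdd that by (rule cINF_lower)
  have "\<exists>u\<in>M. (norm (x - u))\<^sup>2 < D + inverse (real (Suc n))" for n
    using cINF_less_iff[OF assms(3) bdd, of "D + inverse (real (Suc n))"] by (simp add: D_def)
  then obtain u where uM: "\<And>n. u n \<in> M"
    and u: "\<And>n. (norm (x - u n))\<^sup>2 < D + inverse (real (Suc n))"
    by metis
  define e where "e = (\<lambda>n. sqrt (2 * inverse (real (Suc n))))"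
  have "dist (u m) (u n) \<le> e m + e n" for m n
  proof -
    have "(norm (u m - u n))\<^sup>2 \<le> 2 * (norm (x - u m))\<^sup>2 + 2 * (norm (x - u n))\<^sup>2 - 4 * D"
      by (rule convex_dist_bound[OF assms(2) uM uM lower])
    also have "\<dots> \<le> 2 * inverse (real (Suc m)) + 2 * inverse (real (Suc n))"
      using u[of m] u[of n] by linarith
    also have "\<dots> \<le> (e m + e n)\<^sup>2"
      unfolding power2_sum by (simp add: e_def)
    finally show ?thesis
      by (simp add: dist_norm) (rule power2_le_imp_le, simp_all add: e_def)
  qed
  moreover have "e \<longlonglongrightarrow> sqrt (2 * 0)"
    unfolding e_def by (intro tendsto_intros LIMSEQ_inverse_real_of_nat)
  ultimately have "Cauchy u" by (intro Cauchy_if_dist_le_null[of e]) simp_all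
  then obtain m where um: "u \<longlonglongrightarrow> m"
    using Cauchy_convergent_iff convergent_def by blast
  have mM: "m \<in> M" using closed_sequentially[OF assms(1) uM um] .
  have "(norm (x - m))\<^sup>2 \<le> D"
  proof (rule LIMSEQ_le[OF _ LIMSEQ_inverse_real_of_nat_add[of D]])
    show "(\<lambda>n. (norm (x - u n))\<^sup>2) \<longlonglongrightarrow> (norm (x - m))\<^sup>2" by (intro tendsto_intros um)
  qed (use u less_imp_le in blast)
  then have "(norm (x - m))\<^sup>2 \<le> (norm (x - v))\<^sup>2" if "v \<in> M" for v
    using lower[OF that] by linarith
  then show ?thesis using that mM by (meson norm_ge_zero power2_le_imp_le)
qed

lemma nearest_point_orthogonal:
  assumes M: "csubspace M" "m \<in> M" and nearest: "\<And>v. v \<in> M \<Longrightarrow> norm (x - m) \<le> norm (x - v)"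
    and "v \<in> M"
  shows "cinner v (x - m) = 0"
proof (cases "v = 0")
  case False
  define z w N where "z = x - m" and "w = cinner v z" and "N = (norm v)\<^sup>2"
  have N: "N > 0" using False by (simp add: N_def)
  define t where "t = w / complex_of_real N"
  have "m + t *\<^sub>C v \<in> M" using M \<open>v \<in> M\<close> by (simp add: csubspace_def)
  then have "(norm z)\<^sup>2 \<le> (norm (z - t *\<^sub>C v))\<^sup>2"
    using nearest by (simp add: z_def diff_diff_eq)
  also have "\<dots> = (norm z)\<^sup>2 - (cmod w)\<^sup>2 / N"
  proof -
    have "cinner (z - t *\<^sub>C v) (z - t *\<^sub>C v) = cinner z z - t * cnj w - cnj t * w + cnj t * t * N"
      using cinner_commute[of z v]
      by (simp add: cinner_simps w_def N_def cinner_self_eq_norm_sq[of v] algebra_simps)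
    also have "\<dots> = cinner z z - complex_of_real ((cmod w)\<^sup>2 / N)"
      using N by (simp add: t_def field_simps power2_eq_square)
        (metis complex_norm_square of_real_mult power2_eq_square)
    finally show ?thesis by (simp add: power2_norm_eq_cinner)
  qed
  finally have "(cmod w)\<^sup>2 / N \<le> 0" by simp
  then show ?thesis using N by (simp add: w_def z_def divide_le_0_iff)
qed simp

lemma orthogonal_projection_exists:
  fixes M :: "'a::chilbert_space set"
  assumes "closed M" "csubspace M"
  obtains m where "m \<in> M" "\<And>u. u \<in> M \<Longrightarrow> cinner u (x - m) = 0"
proof -
  have "M \<noteq> {}" using assms(2) by (auto simp: csubspace_def)
  with assms obtain m where "m \<in> M" "\<And>v. v \<in> M \<Longrightarrow> norm (x - m) \<le> norm (x - v)"
    using nearest_point_exists csubspace_convex by metis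
  with assms(2) show ?thesis using that nearest_point_orthogonal by metis
qed

lemma Riesz_representation:
  fixes f :: "'a::chilbert_space \<Rightarrow> complex"
  assumes add: "\<And>x y. f (x + y) = f x + f y" and scale: "\<And>c x. f (c *\<^sub>C x) = c * f x"
    and bounded: "\<And>x. cmod (f x) \<le> K * norm x"
  obtains v where "\<And>x. f x = cinner v x"
proof (cases "\<forall>x. f x = 0")
  case True
  then show ?thesis using that[of 0] by simp
next
  case False
  then obtain x0 where x0: "f x0 \<noteq> 0" by blast
  have f0: "f 0 = 0" using scale[of 0 0] by simp
  have f_diff: "f (x - y) = f x - f y" for x y
    using add[of "x - y" y] by simp
  define M where "M = {x. f x = 0}"
  have "csubspace M" unfolding csubspace_def M_def using f0 add scale by auto
  moreover have "closed M"
  proof -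
    have "bounded_linear f"
      using bounded by (intro bounded_linear_intro[where K = K])
        (auto simp: add scale scaleR_conv_of_real scaleR_cscale mult.commute)
    then show ?thesis unfolding M_def
      by (intro closed_Collect_eq continuous_on_const linear_continuous_on)
  qed
  ultimately obtain m where "m \<in> M" and orth: "\<And>u. u \<in> M \<Longrightarrow> cinner u (x0 - m) = 0"
    using orthogonal_projection_exists by blast
  define z where "z = x0 - m"
  have fz: "f z = f x0" using \<open>m \<in> M\<close> by (simp add: z_def f_diff M_def)
  then have zz: "cinner z z \<noteq> 0" using x0 f0 cinner_eq_zero_iff[of z] by auto
  show ?thesis
  proof (rule that)
    fix x
    have "f x *\<^sub>C z - f z *\<^sub>C x \<in> M"
      by (simp add: M_def f_diff scale mult.commute)
    then have "cinner (f x *\<^sub>C z - f z *\<^sub>C x) z = 0" by (simp add: orth z_def)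
    then have "cnj (f x) * cinner z z = cnj (f z) * cinner x z" by (simp add: cinner_simps)
    then have "f x * cinner z z = f z * cinner z x"
      using cinner_commute[of x z] cinner_self_eq_norm_sq[of z]
      by (metis complex_cnj_cnj complex_cnj_complex_of_real complex_cnj_mult)
    then show "f x = cinner (cnj (f z / cinner z z) *\<^sub>C z) x"
      using zz by (simp add: cinner_simps field_simps)
  qed
qed

lemma adj_eqI:
  assumes "\<And>x y. cinner (T x) y = cinner x (S y)"
  shows "adj T = S"
  unfolding adj_def
proof (rule the_equality)
  fix S' assume S': "\<forall>x y. cinner (T x) y = cinner x (S' y)"
  show "S' = S"
  proof (intro ext cinner_ext)
    fix y z show "cinner z (S' y) = cinner z (S y)" using S' assms by metis
  qed
qed (use assms in blast)

lemma cinner_adj_right: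
  fixes T :: "'a::chilbert_space \<Rightarrow> 'a"
  assumes T: "cbounded_linear T"
  shows "cinner (T x) y = cinner x (adj T y)"
proof -
  have lin: "clinear T" using T by (rule cbounded_linear_clinear)
  obtain K where K: "op_bound T K" using T by (auto simp: cbounded_linear_iff)
  have "\<exists>v. \<forall>x. cinner y (T x) = cinner v x" for y
  proof -
    have bound: "cmod (cinner y (T x)) \<le> (norm y * K) * norm x" for x
      using cinner_Cauchy_Schwarz[of y "T x"] mult_left_mono[OF op_boundD[OF K, of x], of "norm y"]
      by (simp add: mult_ac)
    show ?thesis
      by (rule Riesz_representation[of "\<lambda>x. cinner y (T x)", OF _ _ bound])
        (auto simp: clinear_add[OF lin] clinear_cscale[OF lin] cinner_add_right cinner_cscale_right)
  qed
  then obtain S where S: "\<And>y x. cinner y (T x) = cinner (S y) x" by metis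
  have "cinner (T x) y = cinner x (S y)" for x y
    using S[of y x] cinner_commute[of "T x" y] cinner_commute[of "S y" x] by simp
  then show ?thesis using adj_eqI[of T S] by simp
qed

lemma cinner_adj_left:
  fixes T :: "'a::chilbert_space \<Rightarrow> 'a"
  assumes "cbounded_linear T"
  shows "cinner (adj T x) y = cinner x (T y)"
  using cinner_adj_right[OF assms, of y x] cinner_commute[of x "T y"] cinner_commute[of "adj T x" y]
  by simp

lemma adj_adj:
  fixes T :: "'a::chilbert_space \<Rightarrow> 'a"
  shows "cbounded_linear T \<Longrightarrow> adj (adj T) = T"
  by (rule adj_eqI) (simp add: cinner_adj_left)

lemma cbounded_linear_adj:
  fixes T :: "'a::chilbert_space \<Rightarrow> 'a"
  assumes T: "cbounded_linear T"
  shows "cbounded_linear (adj T)"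
proof -
  have "clinear (adj T)"
    unfolding clinear_def
  proof (intro conjI allI)
    fix x y show "adj T (x + y) = adj T x + adj T y"
      by (rule cinner_ext) (simp add: cinner_adj_right[OF T, symmetric] cinner_add_right)
  next
    fix c x show "adj T (c *\<^sub>C x) = c *\<^sub>C adj T x"
      by (rule cinner_ext) (simp add: cinner_adj_right[OF T, symmetric] cinner_cscale_right)
  qed
  moreover obtain K where K: "op_bound T K" "K > 0" using T by (rule cbounded_linear_op_bound)
  have "op_bound (adj T) K"
    unfolding op_bound_def
  proof
    fix y
    have "norm (adj T y) * norm (adj T y) = Re (cinner (T (adj T y)) y)"
      by (simp add: power2_norm_eq_cinner cinner_adj_right[OF T] flip: power2_eq_square)
    also have "\<dots> \<le> norm (T (adj T y)) * norm y" by (rule Re_cinner_le)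
    also have "\<dots> \<le> K * norm (adj T y) * norm y"
      by (rule mult_right_mono[OF op_boundD[OF K(1)]]) simp
    finally have "norm (adj T y) * norm (adj T y) \<le> norm (adj T y) * (K * norm y)"
      by (simp add: mult_ac)
    then show "norm (adj T y) \<le> K * norm y"
      using K(2) by (cases "adj T y = 0") (auto simp: mult_le_cancel_left)
  qed
  ultimately show ?thesis by (auto simp: cbounded_linear_iff)
qed

section \<open>Square roots of positive operators\<close>

text \<open>For a self-adjoint contraction \<open>S\<close> the iteration \<open>X\<^sub>0 = 0\<close>, \<open>X\<^sub>n\<^sub>+\<^sub>1 = (S + X\<^sub>n\<^sup>2) / 2\<close> converges
  to \<open>I - (I - S)\<^sup>1\<^sup>/\<^sup>2\<close>; \<open>half_square_seq\<close> is the same iteration for the scalar \<open>S = 1\<close>, and it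
  majorises the norms of the \<open>X\<^sub>n\<close> and of their increments.\<close>
fun half_square_iter :: "('a::complex_inner \<Rightarrow> 'a) \<Rightarrow> nat \<Rightarrow> 'a \<Rightarrow> 'a" where
  "half_square_iter S 0 = (\<lambda>x. 0)"
| "half_square_iter S (Suc n) =
     (\<lambda>x. (1/2) *\<^sub>R (S x + half_square_iter S n (half_square_iter S n x)))"

fun half_square_seq :: "nat \<Rightarrow> real" where
  "half_square_seq 0 = 0"
| "half_square_seq (Suc n) = (1 + (half_square_seq n)\<^sup>2) / 2"

definition half_square_lim :: "('a::complex_inner \<Rightarrow> 'a) \<Rightarrow> 'a \<Rightarrow> 'a" where
  "half_square_lim S x = lim (\<lambda>n. half_square_iter S n x)"

lemma half_square_seq_bounds: "0 \<le> half_square_seq n \<and> half_square_seq n \<le> 1"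
proof (induction n)
  case (Suc n)
  then have "(half_square_seq n)\<^sup>2 \<le> 1" by (simp add: power_le_one)
  then show ?case by simp
qed simp

lemma incseq_half_square_seq: "incseq half_square_seq"
proof (rule incseq_SucI)
  fix n
  have "0 \<le> (1 - half_square_seq n)\<^sup>2" by simp
  then show "half_square_seq n \<le> half_square_seq (Suc n)"
    by (simp add: power2_eq_square algebra_simps)
qed

lemma convergent_half_square_seq: "convergent half_square_seq"
  using incseq_convergent[OF incseq_half_square_seq, of 1] half_square_seq_bounds
  unfolding convergent_def by blast

lemma clinear_half_square_iter: "clinear S \<Longrightarrow> clinear (half_square_iter S n)"
proof (induction n)
  case 0
  then show ?case by (simp add: clinear_def)
next
  case (Suc n)
  then show ?case
    unfolding clinear_def
    by (simp add: clinear_simps[OF \<open>clinear S\<close>] clinear_simps[OF Suc.IH[OF Suc.prems]]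
        algebra_simps cscale_scaleR_commute cscale_add_right)
qed

lemma half_square_iter_intertwine:
  assumes B: "clinear B" and BS: "\<And>x. B (S\<^sub>1 x) = S\<^sub>2 (B x)"
  shows "B (half_square_iter S\<^sub>1 n x) = half_square_iter S\<^sub>2 n (B x)"
proof (induction n arbitrary: x)
  case 0
  then show ?case by (simp add: clinear_zero[OF B])
next
  case (Suc n)
  then show ?case by (simp add: clinear_simps[OF B] BS)
qed

lemma half_square_iter_commute:
  assumes "clinear S"
  shows "half_square_iter S n (half_square_iter S m x) = half_square_iter S m (half_square_iter S n x)"
proof -
  have "half_square_iter S m (S x) = S (half_square_iter S m x)" for x
    by (rule half_square_iter_intertwine[OF assms, symmetric]) (rule refl)
  then show ?thesis
    by (rule half_square_iter_intertwine[OF clinear_half_square_iter[OF assms], symmetric])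
qed

text \<open>Since the \<open>X\<^sub>n\<close> commute, \<open>X\<^sub>n\<^sub>+\<^sub>1\<^sup>2 - X\<^sub>n\<^sup>2 = (X\<^sub>n\<^sub>+\<^sub>1 + X\<^sub>n) (X\<^sub>n\<^sub>+\<^sub>1 - X\<^sub>n)\<close>.\<close>
lemma half_square_iter_increment:
  fixes S :: "'a::complex_inner \<Rightarrow> 'a" and n :: nat and v :: 'a
  assumes "clinear S"
  defines "d \<equiv> half_square_iter S (Suc n) v - half_square_iter S n v"
  shows "half_square_iter S (Suc (Suc n)) v - half_square_iter S (Suc n) v =
    (1/2) *\<^sub>R (half_square_iter S (Suc n) d + half_square_iter S n d)"
proof -
  have "half_square_iter S (Suc n) (half_square_iter S (Suc n) v) - half_square_iter S n (half_square_iter S n v)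
      = half_square_iter S (Suc n) d + half_square_iter S n d"
    using half_square_iter_commute[OF assms(1), of n "Suc n" v]
    by (simp add: d_def clinear_simps[OF clinear_half_square_iter[OF assms(1)]] del: half_square_iter.simps)
  then show ?thesis
    by (simp only: half_square_iter.simps(2)[of S "Suc n"] half_square_iter.simps(2)[of S n])
      (simp add: algebra_simps del: half_square_iter.simps)
qed

lemma selfadjoint_half_square_iter:
  assumes "selfadjoint S"
  shows "selfadjoint (half_square_iter S n)"
proof (induction n)
  case 0
  then show ?case by (simp add: selfadjoint_def)
next
  case (Suc n)
  then show ?case
    unfolding selfadjoint_def by (simp add: cinner_simps selfadjointD[OF assms] selfadjointD[OF Suc.IH])
qed

locale clinear_contraction =
  fixes S :: "'a::chilbert_space \<Rightarrow> 'a"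
  assumes clinear: "clinear S" and contraction: "op_bound S 1"
begin

abbreviation X where "X \<equiv> half_square_iter S"
abbreviation \<sigma> where "\<sigma> \<equiv> half_square_seq"
abbreviation L where "L \<equiv> half_square_lim S"

text \<open>The scalar sequence satisfies the same increment identity with equality:
  \<open>\<sigma>\<^sub>n\<^sub>+\<^sub>2 - \<sigma>\<^sub>n\<^sub>+\<^sub>1 = (\<sigma>\<^sub>n\<^sub>+\<^sub>1 + \<sigma>\<^sub>n) (\<sigma>\<^sub>n\<^sub>+\<^sub>1 - \<sigma>\<^sub>n) / 2\<close>.\<close>
lemma half_square_iter_bounds:
  "op_bound (X n) (\<sigma> n) \<and> op_bound (\<lambda>v. X (Suc n) v - X n v) (\<sigma> (Suc n) - \<sigma> n)"
proof (induction n)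
  case 0
  show ?case using contraction by (simp add: op_bound_def)
next
  case (Suc n)
  have bound: "op_bound (X n) (\<sigma> n)" and step: "op_bound (\<lambda>v. X (Suc n) v - X n v) (\<sigma> (Suc n) - \<sigma> n)"
    using Suc by auto
  have bound': "op_bound (X (Suc n)) (\<sigma> (Suc n))"
    unfolding op_bound_def
  proof
    fix v
    have "norm (X (Suc n) v) \<le> norm (X n v) + norm (X (Suc n) v - X n v)"
      by (rule norm_triangle_sub)
    also have "\<dots> \<le> \<sigma> (Suc n) * norm v"
      using op_boundD[OF bound, of v] op_boundD[OF step, of v] by (simp add: algebra_simps)
    finally show "norm (X (Suc n) v) \<le> \<sigma> (Suc n) * norm v" .
  qed
  have "op_bound (\<lambda>v. X (Suc (Suc n)) v - X (Suc n) v) (\<sigma> (Suc (Suc n)) - \<sigma> (Suc n))"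
    unfolding op_bound_def
  proof
    fix v
    define d where "d = X (Suc n) v - X n v"
    have "X (Suc (Suc n)) v - X (Suc n) v = (1/2) *\<^sub>R (X (Suc n) d + X n d)"
      unfolding d_def by (rule half_square_iter_increment[OF clinear])
    then have "norm (X (Suc (Suc n)) v - X (Suc n) v) \<le> (1/2) * (norm (X (Suc n) d) + norm (X n d))"
      by (simp add: norm_triangle_ineq del: half_square_iter.simps)
    also have "\<dots> \<le> (1/2) * (\<sigma> (Suc n) * norm d + \<sigma> n * norm d)"
      using op_boundD[OF bound', of d] op_boundD[OF bound, of d] by simp
    also have "\<dots> \<le> (1/2) * (\<sigma> (Suc n) + \<sigma> n) * ((\<sigma> (Suc n) - \<sigma> n) * norm v)"
      using op_boundD[OF step, of v] half_square_seq_bounds[of n] half_square_seq_bounds[of "Suc n"]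
      unfolding d_def by (simp add: distrib_right[symmetric] mult_left_mono del: half_square_seq.simps)
    also have "\<dots> = (\<sigma> (Suc (Suc n)) - \<sigma> (Suc n)) * norm v"
      by (simp only: half_square_seq.simps(2)[of "Suc n"] half_square_seq.simps(2)[of n])
        (simp add: power2_eq_square algebra_simps del: half_square_seq.simps)
    finally show "norm (X (Suc (Suc n)) v - X (Suc n) v) \<le> (\<sigma> (Suc (Suc n)) - \<sigma> (Suc n)) * norm v" .
  qed
  with bound' show ?case by blast
qed

lemma half_square_iter_diff_bound:
  assumes "n \<le> m"
  shows "norm (X m v - X n v) \<le> (\<sigma> m - \<sigma> n) * norm v"
  using assms
proof (induction m rule: dec_induct)
  case (step m)
  have "norm (X (Suc m) v - X n v) \<le> norm (X (Suc m) v - X m v) + norm (X m v - X n v)"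
    using norm_triangle_ineq[of "X (Suc m) v - X m v" "X m v - X n v"] by simp
  also have "\<dots> \<le> (\<sigma> (Suc m) - \<sigma> m) * norm v + (\<sigma> m - \<sigma> n) * norm v"
    using half_square_iter_bounds[of m] step.IH by (meson add_mono op_boundD)
  finally show ?case by (simp add: algebra_simps)
qed simp

lemma tendsto_half_square_lim: "(\<lambda>n. X n v) \<longlonglongrightarrow> L v"
proof -
  obtain l where l: "\<sigma> \<longlonglongrightarrow> l" using convergent_half_square_seq by (auto simp: convergent_def)
  have "dist (X m v) (X n v) \<le> \<bar>\<sigma> m - l\<bar> * norm v + \<bar>\<sigma> n - l\<bar> * norm v" for m n
  proof -
    have "dist (X m v) (X n v) \<le> \<bar>\<sigma> m - \<sigma> n\<bar> * norm v"
      using half_square_iter_diff_bound[of n m v] half_square_iter_diff_bound[of m n v]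
        incseq_half_square_seq[unfolded incseq_def, rule_format, of n m]
        incseq_half_square_seq[unfolded incseq_def, rule_format, of m n]
      by (cases "n \<le> m") (auto simp: dist_norm norm_minus_commute)
    also have "\<dots> \<le> (\<bar>\<sigma> m - l\<bar> + \<bar>\<sigma> n - l\<bar>) * norm v"
      by (rule mult_right_mono) auto
    finally show ?thesis by (simp add: algebra_simps)
  qed
  moreover have "(\<lambda>n. \<bar>\<sigma> n - l\<bar> * norm v) \<longlonglongrightarrow> 0"
    using l by (intro tendsto_mult_left_zero tendsto_rabs_zero LIM_zero)
  ultimately have "Cauchy (\<lambda>n. X n v)" by (rule Cauchy_if_dist_le_null[rotated])
  then show ?thesis
    unfolding half_square_lim_def by (simp add: Cauchy_convergent_iff convergent_LIMSEQ_iff)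
qed

lemma half_square_iter_contraction: "norm (X n v) \<le> norm v"
  using op_boundD[OF conjunct1[OF half_square_iter_bounds[of n]], of v] half_square_seq_bounds[of n]
  by (meson mult_left_le_one_le norm_ge_zero order_trans)

lemma clinear_half_square_lim: "clinear L"
  unfolding clinear_def
proof (intro conjI allI)
  fix u v
  have "(\<lambda>n. X n (u + v)) \<longlonglongrightarrow> L u + L v"
    unfolding clinear_add[OF clinear_half_square_iter[OF clinear]]
    by (intro tendsto_add tendsto_half_square_lim)
  then show "L (u + v) = L u + L v" using tendsto_half_square_lim LIMSEQ_unique by blast
next
  fix c v
  have "(\<lambda>n. X n (c *\<^sub>C v)) \<longlonglongrightarrow> c *\<^sub>C L v"
    unfolding clinear_cscale[OF clinear_half_square_iter[OF clinear]]
    by (intro tendsto_cscale tendsto_half_square_lim)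
  then show "L (c *\<^sub>C v) = c *\<^sub>C L v" using tendsto_half_square_lim LIMSEQ_unique by blast
qed

lemma half_square_lim_contraction: "op_bound L 1"
  unfolding op_bound_def
proof
  fix v
  have "norm (L v) \<le> norm v"
    by (rule LIMSEQ_le_const2[OF tendsto_norm[OF tendsto_half_square_lim]])
      (use half_square_iter_contraction in blast)
  then show "norm (L v) \<le> 1 * norm v" by simp
qed

lemma selfadjoint_half_square_lim:
  assumes "selfadjoint S"
  shows "selfadjoint L"
  unfolding selfadjoint_def
proof (intro allI)
  fix u v
  have "(\<lambda>n. cinner (X n u) v) \<longlonglongrightarrow> cinner (L u) v"
    by (intro tendsto_cinner tendsto_half_square_lim tendsto_const)
  moreover have "(\<lambda>n. cinner (X n u) v) \<longlonglongrightarrow> cinner u (L v)"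
    unfolding selfadjointD[OF selfadjoint_half_square_iter[OF assms]]
    by (intro tendsto_cinner tendsto_half_square_lim tendsto_const)
  ultimately show "cinner (L u) v = cinner u (L v)" by (rule LIMSEQ_unique)
qed

lemma half_square_lim_fixpoint: "L v = (1/2) *\<^sub>R (S v + L (L v))"
proof -
  have "(\<lambda>n. X n (X n v) - L (L v)) \<longlonglongrightarrow> 0"
  proof (rule Lim_null_comparison)
    have "norm (X n (X n v) - L (L v)) \<le> norm (X n v - L v) + norm (X n (L v) - L (L v))" for n
    proof -
      have "X n (X n v) - L (L v) = X n (X n v - L v) + (X n (L v) - L (L v))"
        using clinear_diff[OF clinear_half_square_iter[OF clinear], of n "X n v" "L v"]
        by (simp add: algebra_simps)
      then have "norm (X n (X n v) - L (L v)) \<le> norm (X n (X n v - L v)) + norm (X n (L v) - L (L v))"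
        using norm_triangle_ineq by (simp only:)
      then show ?thesis using half_square_iter_contraction[of n "X n v - L v"] by linarith
    qed
    then show "\<forall>\<^sub>F n in sequentially.
        norm (X n (X n v) - L (L v)) \<le> norm (X n v - L v) + norm (X n (L v) - L (L v))"
      by (intro always_eventually allI)
    show "(\<lambda>n. norm (X n v - L v) + norm (X n (L v) - L (L v))) \<longlonglongrightarrow> 0"
      using tendsto_add[OF tendsto_norm_zero[OF LIM_zero[OF tendsto_half_square_lim]]
          tendsto_norm_zero[OF LIM_zero[OF tendsto_half_square_lim]]]
      by simp
  qed
  then have "(\<lambda>n. (1/2) *\<^sub>R (S v + X n (X n v))) \<longlonglongrightarrow> (1/2) *\<^sub>R (S v + L (L v))"
    by (intro tendsto_scaleR tendsto_add tendsto_const) (rule LIM_zero_cancel)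
  then have "(\<lambda>n. X (Suc n) v) \<longlonglongrightarrow> (1/2) *\<^sub>R (S v + L (L v))" by simp
  moreover have "(\<lambda>n. X (Suc n) v) \<longlonglongrightarrow> L v" by (rule LIMSEQ_Suc[OF tendsto_half_square_lim])
  ultimately show ?thesis using LIMSEQ_unique by blast
qed

end

lemma half_square_lim_intertwine:
  assumes "clinear_contraction S\<^sub>1" "clinear_contraction S\<^sub>2"
    and B: "cbounded_linear B" and BS: "\<And>x. B (S\<^sub>1 x) = S\<^sub>2 (B x)"
  shows "B (half_square_lim S\<^sub>1 x) = half_square_lim S\<^sub>2 (B x)"
proof -
  have "(\<lambda>n. B (half_square_iter S\<^sub>1 n x)) \<longlonglongrightarrow> B (half_square_lim S\<^sub>1 x)"
    by (rule bounded_linear.tendsto[OF cbounded_linear_bounded_linear[OF B]])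
      (rule clinear_contraction.tendsto_half_square_lim[OF assms(1)])
  moreover have "(\<lambda>n. B (half_square_iter S\<^sub>1 n x)) = (\<lambda>n. half_square_iter S\<^sub>2 n (B x))"
    using half_square_iter_intertwine[of B S\<^sub>1 S\<^sub>2] cbounded_linear_clinear[OF B] BS by simp
  then have "(\<lambda>n. B (half_square_iter S\<^sub>1 n x)) \<longlonglongrightarrow> half_square_lim S\<^sub>2 (B x)"
    using clinear_contraction.tendsto_half_square_lim[OF assms(2)] by simp
  ultimately show ?thesis by (rule LIMSEQ_unique)
qed

definition op_sqrt :: "('a::complex_inner \<Rightarrow> 'a) \<Rightarrow> 'a \<Rightarrow> 'a" where
  "op_sqrt T = (THE P. cpositive P \<and> P \<circ> P = T)"

text \<open>For \<open>0 \<le> T \<le> k\<close> the operator \<open>I - T / k\<close> is a self-adjoint contraction, and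
  \<open>(T / k)\<^sup>1\<^sup>/\<^sup>2 = I - lim X\<^sub>n\<close> for the iteration \<open>half_square_iter\<close> built from it.\<close>
definition sqrt_by_iteration :: "real \<Rightarrow> ('a::complex_inner \<Rightarrow> 'a) \<Rightarrow> 'a \<Rightarrow> 'a" where
  "sqrt_by_iteration k T x = sqrt k *\<^sub>R (x - half_square_lim (\<lambda>y. y - (1 / k) *\<^sub>R T y) x)"

lemma positive_shift_contraction:
  assumes T: "cpositive T" "op_bound T k" and k: "0 < k"
  shows "clinear_contraction (\<lambda>y. y - (1 / k) *\<^sub>R T y)" "selfadjoint (\<lambda>y. y - (1 / k) *\<^sub>R T y)"
proof -
  have lin: "clinear T" and sa: "selfadjoint T"
    using T(1) cpositive_selfadjoint by (auto simp: cpositive_def cbounded_linear_iff)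
  show "selfadjoint (\<lambda>y. y - (1 / k) *\<^sub>R T y)"
    unfolding selfadjoint_def by (simp add: cinner_simps selfadjointD[OF sa])
  have "clinear (\<lambda>y. y - (1 / k) *\<^sub>R T y)"
    unfolding clinear_def
    by (simp add: clinear_simps[OF lin] cscale_diff_right cscale_scaleR_commute scaleR_add_right)
  moreover have "op_bound (\<lambda>y. y - (1 / k) *\<^sub>R T y) 1"
    unfolding op_bound_def
  proof
    fix x
    define q where "q = Re (cinner (T x) x)"
    have "(norm (x - (1 / k) *\<^sub>R T x))\<^sup>2 = (norm x)\<^sup>2 - 2 / k * q + (1 / k)\<^sup>2 * (norm (T x))\<^sup>2"
      using Re_cinner_commute[of x "T x"] unfolding q_def power2_norm_eq_cinner
      by (simp add: cinner_simps algebra_simps power2_eq_square)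
    also have "\<dots> \<le> (norm x)\<^sup>2 - 2 / k * q + (1 / k)\<^sup>2 * (k * q)"
      using mult_left_mono[OF cpositive_norm_square_le[OF T, of x], of "(1 / k)\<^sup>2"] by (simp add: q_def)
    also have "\<dots> \<le> (norm x)\<^sup>2"
      using k cpositive_quadratic_form_nonneg[OF T(1), of x] by (simp add: q_def power2_eq_square)
    finally show "norm (x - (1 / k) *\<^sub>R T x) \<le> 1 * norm x"
      using power2_le_imp_le[of "norm (x - (1 / k) *\<^sub>R T x)" "norm x"] by simp
  qed
  ultimately show "clinear_contraction (\<lambda>y. y - (1 / k) *\<^sub>R T y)"
    by (rule clinear_contraction.intro)
qed

locale bounded_positive =
  fixes T :: "'a::chilbert_space \<Rightarrow> 'a" and k :: real
  assumes positive: "cpositive T" and bound: "op_bound T k" and k_pos: "0 < k"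
begin

sublocale shift: clinear_contraction "\<lambda>y. y - (1 / k) *\<^sub>R T y"
  using positive_shift_contraction[OF positive bound k_pos] by simp

abbreviation R where "R \<equiv> sqrt_by_iteration k T"

lemma cpositive_sqrt_by_iteration: "cpositive R"
proof -
  have lin: "clinear shift.L" and contr: "op_bound shift.L 1" and sa: "selfadjoint shift.L"
    using shift.clinear_half_square_lim shift.half_square_lim_contraction
      shift.selfadjoint_half_square_lim[OF positive_shift_contraction(2)[OF positive bound k_pos]]
    by auto
  have "clinear R"
    unfolding clinear_def sqrt_by_iteration_def
    by (simp add: clinear_simps[OF lin] cscale_scaleR_commute cscale_diff_right scaleR_diff_right
        scaleR_add_right algebra_simps)
  moreover have "op_bound R (2 * sqrt k)"
    unfolding op_bound_def sqrt_by_iteration_def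
  proof
    fix x
    have "norm (x - shift.L x) \<le> 2 * norm x"
      using norm_triangle_ineq4[of x "shift.L x"] op_boundD[OF contr, of x] by simp
    then show "norm (sqrt k *\<^sub>R (x - shift.L x)) \<le> 2 * sqrt k * norm x"
      using k_pos by (simp add: mult_left_mono mult.assoc)
  qed
  moreover have "Im (cinner (R x) x) = 0" "0 \<le> Re (cinner (R x) x)" for x
  proof -
    have "cinner (R x) x = complex_of_real (sqrt k * ((norm x)\<^sup>2 - Re (cinner (shift.L x) x)))"
      using selfadjoint_quadratic_form_real[OF sa, of x]
      by (simp add: sqrt_by_iteration_def cinner_simps cinner_self_eq_norm_sq algebra_simps)
    moreover have "Re (cinner (shift.L x) x) \<le> (norm x)\<^sup>2"
      using Re_cinner_le[of "shift.L x" x] mult_right_mono[OF op_boundD[OF contr, of x], of "norm x"]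
      by (simp add: power2_eq_square)
    ultimately show "Im (cinner (R x) x) = 0" "0 \<le> Re (cinner (R x) x)" using k_pos by simp_all
  qed
  ultimately show ?thesis by (auto simp: cpositive_def cbounded_linear_iff)
qed

lemma sqrt_by_iteration_square: "R (R x) = T x"
proof -
  have "2 *\<^sub>R shift.L x = 2 *\<^sub>R ((1/2) *\<^sub>R (x - (1 / k) *\<^sub>R T x + shift.L (shift.L x)))"
    using shift.half_square_lim_fixpoint[of x] by (rule arg_cong)
  then have LL: "shift.L (shift.L x) = 2 *\<^sub>R shift.L x - x + (1 / k) *\<^sub>R T x"
    by (simp add: algebra_simps)
  have "R (R x) = k *\<^sub>R (x - 2 *\<^sub>R shift.L x + shift.L (shift.L x))"
    using k_pos by (simp add: sqrt_by_iteration_def clinear_simps[OF shift.clinear_half_square_lim]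
        algebra_simps scaleR_2)
  also have "\<dots> = T x"
    using k_pos by (simp add: LL algebra_simps)
  finally show ?thesis .
qed

end

lemma sqrt_by_iteration_intertwine:
  assumes "bounded_positive T\<^sub>1 k" "bounded_positive T\<^sub>2 k"
    and B: "cbounded_linear B" and BT: "\<And>x. B (T\<^sub>1 x) = T\<^sub>2 (B x)"
  shows "B (sqrt_by_iteration k T\<^sub>1 x) = sqrt_by_iteration k T\<^sub>2 (B x)"
proof -
  interpret T\<^sub>1: bounded_positive T\<^sub>1 k by fact
  interpret T\<^sub>2: bounded_positive T\<^sub>2 k by fact
  have "B (T\<^sub>1.shift.L x) = T\<^sub>2.shift.L (B x)"
    by (rule half_square_lim_intertwine[OF T\<^sub>1.shift.clinear_contraction_axioms
          T\<^sub>2.shift.clinear_contraction_axioms B])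
      (simp add: clinear_simps[OF cbounded_linear_clinear[OF B]] BT)
  then show ?thesis
    unfolding sqrt_by_iteration_def by (simp add: clinear_simps[OF cbounded_linear_clinear[OF B]])
qed

context bounded_positive
begin

lemma sqrt_by_iteration_unique:
  assumes P: "cpositive P" and PP: "\<And>x. P (P x) = T x"
  shows "P = R"
proof
  fix x
  have P_lin: "clinear P" and P_sa: "selfadjoint P"
    using P cpositive_selfadjoint by (auto simp: cpositive_def cbounded_linear_iff)
  have R_pos: "cpositive R" by (rule cpositive_sqrt_by_iteration)
  then have R_lin: "clinear R" and R_sa: "selfadjoint R"
    using cpositive_selfadjoint by (auto simp: cpositive_def cbounded_linear_iff)
  have "P (T y) = T (P y)" for y by (simp flip: PP)
  then have PR: "P (R y) = R (P y)" for y
    using sqrt_by_iteration_intertwine[OF bounded_positive_axioms bounded_positive_axioms] P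
    by (auto simp: cpositive_def)
  define v where "v = P x - R x"
  have "P v + R v = 0"
    by (simp add: v_def clinear_simps[OF P_lin] clinear_simps[OF R_lin] PP sqrt_by_iteration_square PR)
  then have "Re (cinner (P v) v) + Re (cinner (R v) v) = 0"
    by (metis cinner_add_left cinner_zero_left plus_complex.sel(1) zero_complex.sel(1))
  then have "P v = 0" "R v = 0"
    using cpositive_quadratic_form_nonneg[OF P, of v] cpositive_quadratic_form_nonneg[OF R_pos, of v]
      cpositive_quadratic_form_eq_0[OF P, of v] cpositive_quadratic_form_eq_0[OF R_pos, of v]
    by linarith+
  have "cinner v v = cinner (P x) v - cinner (R x) v"
    by (simp add: v_def cinner_diff_left)
  also have "\<dots> = cinner x (P v) - cinner x (R v)"
    by (simp add: selfadjointD[OF P_sa] selfadjointD[OF R_sa])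
  finally have "cinner v v = 0" using \<open>P v = 0\<close> \<open>R v = 0\<close> by simp
  then show "P x = R x" by (simp add: cinner_eq_zero_iff v_def)
qed

lemma op_sqrt_eq_sqrt_by_iteration: "op_sqrt T = R"
  unfolding op_sqrt_def
proof (rule the_equality)
  show "cpositive R \<and> R \<circ> R = T"
    using cpositive_sqrt_by_iteration sqrt_by_iteration_square by (simp add: comp_def)
next
  fix P assume P: "cpositive P \<and> P \<circ> P = T"
  then have "P (P x) = T x" for x by (metis comp_apply)
  with P show "P = R" by (intro sqrt_by_iteration_unique) simp_all
qed

end

lemma cpositive_bounded_positive:
  assumes "cpositive T"
  obtains k where "bounded_positive T k"
proof -
  have "cbounded_linear T" using assms by (simp add: cpositive_def)
  then obtain k where "k > 0" "op_bound T k" by (rule cbounded_linear_op_bound)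
  with assms show ?thesis by (intro that bounded_positive.intro)
qed

lemma
  fixes T :: "'a::chilbert_space \<Rightarrow> 'a"
  assumes "cpositive T"
  shows cpositive_op_sqrt: "cpositive (op_sqrt T)"
    and op_sqrt_square: "op_sqrt T (op_sqrt T x) = T x"
proof -
  obtain k where "bounded_positive T k" using assms by (rule cpositive_bounded_positive)
  then interpret bounded_positive T k .
  show "cpositive (op_sqrt T)" "op_sqrt T (op_sqrt T x) = T x"
    by (simp_all add: op_sqrt_eq_sqrt_by_iteration cpositive_sqrt_by_iteration sqrt_by_iteration_square)
qed

lemma power2_norm_op_sqrt:
  fixes T :: "'a::chilbert_space \<Rightarrow> 'a"
  assumes "cpositive T"
  shows "(norm (op_sqrt T x))\<^sup>2 = Re (cinner (T x) x)"
  using selfadjointD[OF cpositive_selfadjoint[OF cpositive_op_sqrt[OF assms]], of "op_sqrt T x" x]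
  by (simp add: power2_norm_eq_cinner op_sqrt_square[OF assms])

lemma op_sqrt_intertwine:
  fixes T\<^sub>1 T\<^sub>2 :: "'a::chilbert_space \<Rightarrow> 'a"
  assumes T: "cpositive T\<^sub>1" "cpositive T\<^sub>2"
    and B: "cbounded_linear B" and BT: "\<And>x. B (T\<^sub>1 x) = T\<^sub>2 (B x)"
  shows "B (op_sqrt T\<^sub>1 x) = op_sqrt T\<^sub>2 (B x)"
proof -
  obtain k\<^sub>1 k\<^sub>2 where "bounded_positive T\<^sub>1 k\<^sub>1" "bounded_positive T\<^sub>2 k\<^sub>2"
    using cpositive_bounded_positive T by metis
  then have "bounded_positive T\<^sub>1 (max k\<^sub>1 k\<^sub>2)" "bounded_positive T\<^sub>2 (max k\<^sub>1 k\<^sub>2)"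
    unfolding bounded_positive_def by (auto intro: op_bound_mono simp: less_max_iff_disj)
  with B BT show ?thesis
    by (simp add: bounded_positive.op_sqrt_eq_sqrt_by_iteration sqrt_by_iteration_intertwine)
qed

section \<open>The modulus and the mixed Schwarz inequality\<close>

lemma cbounded_linear_compose:
  assumes "cbounded_linear T" "cbounded_linear U"
  shows "cbounded_linear (\<lambda>x. T (U x))"
proof -
  obtain K where "K > 0" "op_bound T K" using assms(1) by (rule cbounded_linear_op_bound)
  moreover obtain L where "op_bound U L" using assms(2) by (auto simp: cbounded_linear_iff)
  ultimately have "op_bound (\<lambda>x. T (U x)) (K * L)" by (simp add: op_bound_compose)
  then show ?thesis
    using clinear_compose[OF cbounded_linear_clinear[OF assms(1)] cbounded_linear_clinear[OF assms(2)]]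
    unfolding cbounded_linear_iff by blast
qed

lemma cpositive_adj_compose:
  fixes T :: "'a::chilbert_space \<Rightarrow> 'a"
  assumes "cbounded_linear T"
  shows "cpositive (\<lambda>x. adj T (T x))"
  using cbounded_linear_compose[OF cbounded_linear_adj[OF assms] assms]
  by (simp add: cpositive_def cinner_adj_left[OF assms] cinner_self_eq_norm_sq)

lemma op_abs_eq_op_sqrt: "op_abs T = op_sqrt (\<lambda>x. adj T (T x))"
  by (simp add: op_abs_def op_sqrt_def comp_def)

lemma
  fixes T :: "'a::chilbert_space \<Rightarrow> 'a"
  assumes "cbounded_linear T"
  shows cpositive_op_abs: "cpositive (op_abs T)"
    and op_abs_square: "op_abs T (op_abs T x) = adj T (T x)"
  unfolding op_abs_eq_op_sqrt
  by (simp_all add: cpositive_op_sqrt op_sqrt_square cpositive_adj_compose[OF assms])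

lemma op_abs_quadratic_form:
  fixes T :: "'a::chilbert_space \<Rightarrow> 'a"
  assumes "cbounded_linear T"
  shows "Re (cinner (op_abs T (op_abs T x)) x) = (norm (T x))\<^sup>2"
  by (simp add: op_abs_square[OF assms] cinner_adj_left[OF assms] power2_norm_eq_cinner)

lemma norm_op_abs:
  fixes T :: "'a::chilbert_space \<Rightarrow> 'a"
  assumes "cbounded_linear T"
  shows "norm (op_abs T x) = norm (T x)"
proof -
  have "(norm (op_abs T x))\<^sup>2 = Re (cinner (op_abs T (op_abs T x)) x)"
    using selfadjointD[OF cpositive_selfadjoint[OF cpositive_op_abs[OF assms]], of "op_abs T x" x]
    by (simp add: power2_norm_eq_cinner)
  also have "\<dots> = (norm (T x))\<^sup>2" by (rule op_abs_quadratic_form[OF assms])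
  finally show ?thesis by (simp add: power2_eq_iff_nonneg)
qed

lemma op_abs_intertwine:
  fixes A :: "'a::chilbert_space \<Rightarrow> 'a"
  assumes A: "cbounded_linear A"
  shows "A (op_abs A x) = op_abs (adj A) (A x)"
proof -
  have "cpositive (\<lambda>x. A (adj A x))"
    using cpositive_adj_compose[OF cbounded_linear_adj[OF A]] by (simp add: adj_adj[OF A])
  then have "A (op_sqrt (\<lambda>x. adj A (A x)) x) = op_sqrt (\<lambda>x. A (adj A x)) (A x)"
    by (rule op_sqrt_intertwine[OF cpositive_adj_compose[OF A] _ A]) simp
  then show ?thesis unfolding op_abs_eq_op_sqrt adj_adj[OF A] .
qed

lemma closure_range_kernel_decomposition:
  fixes R :: "'a::chilbert_space \<Rightarrow> 'a"
  assumes R: "cbounded_linear R" "selfadjoint R"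
  obtains m where "m \<in> closure (range R)" "R (x - m) = 0"
proof -
  obtain m where m: "m \<in> closure (range R)"
    and orth: "\<And>u. u \<in> closure (range R) \<Longrightarrow> cinner u (x - m) = 0"
    using orthogonal_projection_exists[OF closed_closure
        csubspace_closure[OF csubspace_range[OF cbounded_linear_clinear[OF R(1)]]], of x] by blast
  have "cinner z (R (x - m)) = 0" for z
  proof -
    have "R z \<in> closure (range R)" by (rule subsetD[OF closure_subset rangeI])
    then have "cinner (R z) (x - m) = 0" by (rule orth)
    then show ?thesis by (simp add: selfadjointD[OF R(2)])
  qed
  from this[of "R (x - m)"] have "R (x - m) = 0" by (simp add: cinner_eq_zero_iff)
  with m show ?thesis by (rule that)
qed

text \<open>Writing \<open>R = |A|\<^sup>1\<^sup>/\<^sup>2\<close>, the identity \<open>A R = |A\<^sup>*|\<^sup>1\<^sup>/\<^sup>2 A\<close> and \<open>\<parallel>A z\<parallel> = \<parallel>R\<^sup>2 z\<parallel>\<close> give the bound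
  for \<open>x\<close> in the range of \<open>R\<close>; it extends to the closure by continuity, and the remaining
  component of \<open>x\<close> lies in the kernel of \<open>R\<close>, hence in that of \<open>A\<close>.\<close>
lemma mixed_Schwarz:
  fixes A :: "'a::chilbert_space \<Rightarrow> 'a"
  assumes A: "cbounded_linear A"
  shows "cmod (cinner (A x) y) \<le> norm (op_sqrt (op_abs A) x) * norm (op_sqrt (op_abs (adj A)) y)"
proof -
  define R S where "R = op_sqrt (op_abs A)" and "S = op_sqrt (op_abs (adj A))"
  have R: "cpositive R"
    unfolding R_def by (rule cpositive_op_sqrt[OF cpositive_op_abs[OF A]])
  have S: "cpositive S"
    unfolding S_def by (rule cpositive_op_sqrt[OF cpositive_op_abs[OF cbounded_linear_adj[OF A]]])
  have R_cbl: "cbounded_linear R" using R by (simp add: cpositive_def)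
  have RR: "R (R z) = op_abs A z" for z
    unfolding R_def by (rule op_sqrt_square[OF cpositive_op_abs[OF A]])
  have AR: "A (R z) = S (A z)" for z
    unfolding R_def S_def
    by (rule op_sqrt_intertwine[OF cpositive_op_abs[OF A] cpositive_op_abs[OF cbounded_linear_adj[OF A]] A])
      (rule op_abs_intertwine[OF A])
  let ?G = "{u. cmod (cinner (A u) y) \<le> norm (R u) * norm (S y)}"
  have "range R \<subseteq> ?G"
  proof
    fix u assume "u \<in> range R"
    then obtain z where u: "u = R z" by blast
    have "cmod (cinner (A u) y) = cmod (cinner (A z) (S y))"
      using selfadjointD[OF cpositive_selfadjoint[OF S], of "A z" y] by (simp add: u AR)
    also have "\<dots> \<le> norm (A z) * norm (S y)" by (rule cinner_Cauchy_Schwarz)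
    also have "norm (A z) = norm (R u)" by (simp add: u RR norm_op_abs[OF A])
    finally show "u \<in> ?G" by simp
  qed
  moreover have "closed ?G"
  proof (rule closed_Collect_le)
    show "continuous_on UNIV (\<lambda>u. cmod (cinner (A u) y))"
      by (intro continuous_on_norm continuous_on_cinner continuous_on_const
          linear_continuous_on[OF cbounded_linear_bounded_linear[OF A]])
    show "continuous_on UNIV (\<lambda>u. norm (R u) * norm (S y))"
      by (intro continuous_on_mult continuous_on_norm continuous_on_const
          linear_continuous_on[OF cbounded_linear_bounded_linear[OF R_cbl]])
  qed
  ultimately have closure: "closure (range R) \<subseteq> ?G" by (rule closure_minimal)
  obtain m where m: "m \<in> closure (range R)" and R_ker: "R (x - m) = 0"
    using closure_range_kernel_decomposition[OF R_cbl cpositive_selfadjoint[OF R]] by blast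
  have "norm (A (x - m)) = norm (R (R (x - m)))" by (simp add: RR norm_op_abs[OF A])
  then have "A (x - m) = 0" by (simp add: R_ker clinear_zero[OF cbounded_linear_clinear[OF R_cbl]])
  then have "A x = A m" "R x = R m"
    using R_ker by (simp_all add: clinear_diff cbounded_linear_clinear[OF A] cbounded_linear_clinear[OF R_cbl])
  moreover have "m \<in> ?G" by (rule subsetD[OF closure m])
  ultimately show ?thesis unfolding R_def[symmetric] S_def[symmetric] by simp
qed

lemma mixed_Schwarz_quadratic_forms:
  fixes A :: "'a::chilbert_space \<Rightarrow> 'a"
  assumes A: "cbounded_linear A"
  shows "(cmod (cinner (A x) y))\<^sup>2 \<le> Re (cinner (op_abs A x) x) * Re (cinner (op_abs (adj A) y) y)"
  using power_mono[OF mixed_Schwarz[OF A, of x y], of 2]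
  by (simp add: power_mult_distrib power2_norm_op_sqrt cpositive_op_abs A cbounded_linear_adj)

section \<open>The numerical radius bound\<close>

definition mean_deviation :: "('a::complex_inner \<Rightarrow> 'a) \<Rightarrow> ('a \<Rightarrow> 'a) \<Rightarrow> 'a \<Rightarrow> real" where
  "mean_deviation P Q x =
     (let c = (1/2) * cinner (P x + Q x) x;
          B1 = op_abs (\<lambda>y. P y - c *\<^sub>C y);
          B2 = op_abs (\<lambda>y. Q y - c *\<^sub>C y)
      in Re (cinner (B1 (B1 x) + B2 (B2 x)) x))"

lemma mean_deviation_eq_norms:
  fixes P Q :: "'a::chilbert_space \<Rightarrow> 'a" and x :: 'a
  assumes P: "cpositive P" and Q: "cpositive Q"
  defines "c \<equiv> (1/2) * cinner (P x + Q x) x"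
  shows "mean_deviation P Q x = (norm (P x - c *\<^sub>C x))\<^sup>2 + (norm (Q x - c *\<^sub>C x))\<^sup>2"
  using P Q unfolding mean_deviation_def Let_def c_def[symmetric]
  by (simp add: cinner_add_left op_abs_quadratic_form cbounded_linear_diff_cscale cpositive_def)

lemma mean_deviation_nonneg:
  fixes P Q :: "'a::chilbert_space \<Rightarrow> 'a"
  shows "cpositive P \<Longrightarrow> cpositive Q \<Longrightarrow> 0 \<le> mean_deviation P Q x"
  by (simp add: mean_deviation_eq_norms)

lemma mean_deviation_unit_eq:
  fixes P Q :: "'a::chilbert_space \<Rightarrow> 'a"
  assumes P: "cpositive P" and Q: "cpositive Q" and x: "norm x = 1"
  shows "mean_deviation P Q x =
    (norm (P x))\<^sup>2 + (norm (Q x))\<^sup>2 - (Re (cinner (P x) x) + Re (cinner (Q x) x))\<^sup>2 / 2"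
proof -
  define a b where "a = Re (cinner (P x) x)" and "b = Re (cinner (Q x) x)"
  have c: "(1/2) * cinner (P x + Q x) x = complex_of_real ((a + b) / 2)"
    using selfadjoint_quadratic_form_real[OF cpositive_selfadjoint[OF P], of x]
      selfadjoint_quadratic_form_real[OF cpositive_selfadjoint[OF Q], of x]
    by (simp add: a_def b_def cinner_add_left)
  have "mean_deviation P Q x = (norm (P x - complex_of_real ((a + b) / 2) *\<^sub>C x))\<^sup>2
      + (norm (Q x - complex_of_real ((a + b) / 2) *\<^sub>C x))\<^sup>2"
    unfolding mean_deviation_eq_norms[OF P Q] c ..
  also have "\<dots> = (norm (P x))\<^sup>2 - 2 * ((a + b) / 2) * a + ((a + b) / 2)\<^sup>2
      + ((norm (Q x))\<^sup>2 - 2 * ((a + b) / 2) * b + ((a + b) / 2)\<^sup>2)"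
    unfolding power2_norm_diff_real_cscale x a_def b_def by simp
  also have "\<dots> = (norm (P x))\<^sup>2 + (norm (Q x))\<^sup>2 - (a + b)\<^sup>2 / 2"
    by (simp add: power2_eq_square field_simps)
  finally show ?thesis by (simp add: a_def b_def)
qed

lemma power2_norm_add_le_onorm:
  fixes P Q :: "'a::chilbert_space \<Rightarrow> 'a"
  assumes P: "cpositive P" and Q: "cpositive Q" and x: "norm x = 1"
  shows "(norm (P x))\<^sup>2 + (norm (Q x))\<^sup>2 \<le> onorm (\<lambda>y. P (P y) + Q (Q y))"
proof -
  have "bounded_linear P" "bounded_linear Q"
    using P Q by (simp_all add: cpositive_def cbounded_linear_bounded_linear)
  then have bl: "bounded_linear (\<lambda>y. P (P y) + Q (Q y))"
    by (intro bounded_linear_add bounded_linear_compose[of P P] bounded_linear_compose[of Q Q])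
  have "(norm (P x))\<^sup>2 + (norm (Q x))\<^sup>2 = Re (cinner (P (P x) + Q (Q x)) x)"
    by (simp add: power2_norm_eq_cinner cinner_add_left selfadjointD[OF cpositive_selfadjoint[OF P]]
        selfadjointD[OF cpositive_selfadjoint[OF Q]])
  also have "\<dots> \<le> norm (P (P x) + Q (Q x)) * norm x" by (rule Re_cinner_le)
  also have "\<dots> \<le> onorm (\<lambda>y. P (P y) + Q (Q y))" using onorm[OF bl, of x] x by simp
  finally show ?thesis .
qed

lemma power2_cmod_cinner_le_mean_deviation:
  fixes A :: "'a::chilbert_space \<Rightarrow> 'a"
  assumes A: "cbounded_linear A" and x: "norm x = 1"
  shows "(cmod (cinner (A x) x))\<^sup>2 \<le>
    (1/2) * (onorm (\<lambda>y. op_abs A (op_abs A y) + op_abs (adj A) (op_abs (adj A) y))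
      - mean_deviation (op_abs A) (op_abs (adj A)) x)"
proof -
  have P: "cpositive (op_abs A)" and Q: "cpositive (op_abs (adj A))"
    using cpositive_op_abs[OF A] cpositive_op_abs[OF cbounded_linear_adj[OF A]] .
  define a b where "a = Re (cinner (op_abs A x) x)" and "b = Re (cinner (op_abs (adj A) x) x)"
  have "(cmod (cinner (A x) x))\<^sup>2 \<le> a * b"
    unfolding a_def b_def by (rule mixed_Schwarz_quadratic_forms[OF A])
  also have "\<dots> \<le> ((a + b) / 2)\<^sup>2"
    using zero_le_power2[of "a - b"] by (simp add: power2_eq_square field_simps)
  also have "\<dots> = (1/2) * ((norm (op_abs A x))\<^sup>2 + (norm (op_abs (adj A) x))\<^sup>2
      - mean_deviation (op_abs A) (op_abs (adj A)) x)"
    by (simp add: mean_deviation_unit_eq[OF P Q x] a_def b_def power2_eq_square field_simps)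
  also have "\<dots> \<le> (1/2) * (onorm (\<lambda>y. op_abs A (op_abs A y) + op_abs (adj A) (op_abs (adj A) y))
      - mean_deviation (op_abs A) (op_abs (adj A)) x)"
    using power2_norm_add_le_onorm[OF P Q x] by simp
  finally show ?thesis .
qed

lemma numrad_power2_le:
  fixes A :: "'a::complex_inner \<Rightarrow> 'a"
  assumes nontrivial: "\<exists>x::'a. x \<noteq> 0" and bound: "\<And>x. norm x = 1 \<Longrightarrow> (cmod (cinner (A x) x))\<^sup>2 \<le> \<beta>"
  shows "(numrad A)\<^sup>2 \<le> \<beta>"
proof -
  obtain x0 :: 'a where "x0 \<noteq> 0" using nontrivial by blast
  define u where "u = (1 / norm x0) *\<^sub>R x0"
  have u: "u \<in> {x. norm x = 1}" using \<open>x0 \<noteq> 0\<close> by (simp add: u_def)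
  have le_sqrt: "cmod (cinner (A x) x) \<le> sqrt \<beta>" if "x \<in> {x. norm x = 1}" for x
    using bound that by (simp add: real_le_rsqrt)
  have "numrad A \<le> sqrt \<beta>"
    unfolding numrad_def by (rule cSUP_least) (use u le_sqrt in auto)
  moreover have "0 \<le> numrad A"
  proof -
    have "bdd_above ((\<lambda>x. cmod (cinner (A x) x)) ` {x. norm x = 1})"
      using le_sqrt by (intro bdd_aboveI) auto
    then have "cmod (cinner (A u) u) \<le> numrad A"
      unfolding numrad_def by (rule cSUP_upper[OF u])
    then show ?thesis using norm_ge_zero order_trans by blast
  qed
  moreover have "0 \<le> \<beta>" using bound[of u] u zero_le_power2 order_trans by blast
  ultimately show ?thesis using power_mono[of "numrad A" "sqrt \<beta>" 2] by simp
qed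

theorem theorem2p9:
  fixes A :: "'a::chilbert_space \<Rightarrow> 'a"
  assumes "cbounded_linear A"
    and "\<exists>x::'a. x \<noteq> 0"
  shows "(numrad A)\<^sup>2 \<le>
    (1/2) * (onorm (\<lambda>y. op_abs A (op_abs A y) + op_abs (adj A) (op_abs (adj A) y))
      - (INF x\<in>{x::'a. norm x = 1}.
           (let c = (1/2) * cinner (op_abs A x + op_abs (adj A) x) x;
                B1 = op_abs (\<lambda>y. op_abs A y - c *\<^sub>C y);
                B2 = op_abs (\<lambda>y. op_abs (adj A) y - c *\<^sub>C y)
            in Re (cinner (B1 (B1 x) + B2 (B2 x)) x))))"
proof -
  let ?\<xi> = "mean_deviation (op_abs A) (op_abs (adj A))"
  have bdd: "bdd_below (?\<xi> ` {x. norm x = 1})"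
    using mean_deviation_nonneg[OF cpositive_op_abs[OF assms(1)] cpositive_op_abs[OF cbounded_linear_adj[OF assms(1)]]]
    by (intro bdd_belowI[of _ 0]) blast
  have "(cmod (cinner (A x) x))\<^sup>2 \<le>
      (1/2) * (onorm (\<lambda>y. op_abs A (op_abs A y) + op_abs (adj A) (op_abs (adj A) y))
        - (INF x\<in>{x. norm x = 1}. ?\<xi> x))" if "norm x = 1" for x
  proof -
    have "(INF x\<in>{x. norm x = 1}. ?\<xi> x) \<le> ?\<xi> x" by (rule cINF_lower[OF bdd]) (simp add: that)
    with power2_cmod_cinner_le_mean_deviation[OF assms(1) that] show ?thesis by simp
  qed
  then show ?thesis unfolding mean_deviation_def by (rule numrad_power2_le[OF assms(2)])
qed

end
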